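(* In the variety of nonempty sets, a nonempty set $G$ is geometrically stable if and only if $|G|=1$.
   Context: Regard nonempty sets as left $S$-acts over the trivial monoid $S=\{1\}$: the free object on a nonempty finite set $X$ is $X$, homomorphisms are arbitrary maps, congruences are equivalence relations. For a set $G$ and a set $A$ of maps $X\to G$, let $A'=\bigcap_{\mu\in A}\ker\mu$ (empty intersection $=X\times X$), where $\ker\mu=\{(x,y):\mu(x)=\mu(y)\}$; for a relation $T\subseteq X\times X$ let $T'_G=\{\mu:X\to G: T\subseteq\ker\mu\}$; and $A''=(A')'_G$. A set $A$ of maps $X\to G$ is an algebraic variety if $A=T'_G$ for some relation $T$ on $X$. $G$ is geometrically stable iff for every nonempty finite set $X$ and all algebraic varieties $A,B$ of maps $X\to G$, one has $(A\cup B)''=A\cup B$. *)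

theory Defs
  imports Main "HOL-Library.FuncSet"
begin

(* Acts over the trivial monoid = nonempty sets; maps X \<rightarrow> G are the
  extensional functions in PiE X (%_. G).  Free objects on finite sets X are
  represented by finite nonempty sets of naturals (every finite set is in
  bijection with one). *)

definition ker_on :: "'x set \<Rightarrow> ('x \<Rightarrow> 'g) \<Rightarrow> ('x \<times> 'x) set" where
  "ker_on X \<mu> = {(x, y). x \<in> X \<and> y \<in> X \<and> \<mu> x = \<mu> y}"

definition prime_maps :: "'x set \<Rightarrow> ('x \<Rightarrow> 'g) set \<Rightarrow> ('x \<times> 'x) set" where
  "prime_maps X A = (X \<times> X) \<inter> \<Inter> (ker_on X ` A)"

definition prime_rel :: "'x set \<Rightarrow> 'g set \<Rightarrow> ('x \<times> 'x) set \<Rightarrow> ('x \<Rightarrow> 'g) set" where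
  "prime_rel X G T = {\<mu> \<in> X \<rightarrow>\<^sub>E G. T \<subseteq> ker_on X \<mu>}"

definition dprime :: "'x set \<Rightarrow> 'g set \<Rightarrow> ('x \<Rightarrow> 'g) set \<Rightarrow> ('x \<Rightarrow> 'g) set" where
  "dprime X G A = prime_rel X G (prime_maps X A)"

definition algebraic_variety :: "'x set \<Rightarrow> 'g set \<Rightarrow> ('x \<Rightarrow> 'g) set \<Rightarrow> bool" where
  "algebraic_variety X G A \<longleftrightarrow> (\<exists>T. T \<subseteq> X \<times> X \<and> A = prime_rel X G T)"

definition geometrically_stable :: "'g set \<Rightarrow> bool" where
  "geometrically_stable G \<longleftrightarrow>
     (\<forall>X :: nat set. finite X \<and> X \<noteq> {} \<longrightarrow>
        (\<forall>A B. algebraic_variety X G A \<and> algebraic_variety X G B \<longrightarrow>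
               dprime X G (A \<union> B) = A \<union> B))"

end

theory Submission
  imports Defs
begin

text \<open>
  Over a one-point \<open>G\<close> there is only one map \<open>X \<rightarrow> G\<close>, so every variety is everything.
  If \<open>G\<close> has two elements \<open>a \<noteq> b\<close>, take \<open>X = {x, y, z}\<close> and the varieties cut out by
  \<open>x = y\<close> and by \<open>y = z\<close>. Their union contains the maps that are \<open>a\<close> except for a
  single \<open>b\<close> at \<open>z\<close>, resp. at \<open>x\<close>; these two maps already separate all points, so the
  closure of the union is the set of all maps, which contains the map with its \<open>b\<close>
  at \<open>y\<close>, lying in neither variety.
\<close>

lemma prime_maps_subset: "prime_maps X A \<subseteq> X \<times> X"
  by (simp add: prime_maps_def)

lemma prime_maps_mono: "A \<subseteq> B \<Longrightarrow> prime_maps X B \<subseteq> prime_maps X A"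
  by (auto simp: prime_maps_def)

lemma algebraic_variety_prime_rel:
  "T \<subseteq> X \<times> X \<Longrightarrow> algebraic_variety X G (prime_rel X G T)"
  by (auto simp: algebraic_variety_def)

lemma geometrically_stableD:
  fixes X :: "nat set"
  assumes "geometrically_stable G" "finite X" "X \<noteq> {}"
    and "algebraic_variety X G A" "algebraic_variety X G B"
  shows "dprime X G (A \<union> B) = A \<union> B"
  using assms by (simp add: geometrically_stable_def)

lemma ker_on_singleton_codomain:
  assumes "\<mu> \<in> X \<rightarrow>\<^sub>E {g}"
  shows "ker_on X \<mu> = X \<times> X"
  using assms by (auto simp: ker_on_def)

lemma prime_rel_singleton_codomain:
  assumes "T \<subseteq> X \<times> X"
  shows "prime_rel X {g} T = X \<rightarrow>\<^sub>E {g}"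
  using assms by (auto simp: prime_rel_def ker_on_singleton_codomain)

lemma geometrically_stable_singleton: "geometrically_stable {g}"
proof -
  have "dprime X {g} (A \<union> B) = A \<union> B"
    if "algebraic_variety X {g} A" "algebraic_variety X {g} B" for X :: "nat set" and A B
  proof -
    have "A = X \<rightarrow>\<^sub>E {g}" "B = X \<rightarrow>\<^sub>E {g}"
      using that by (auto simp: algebraic_variety_def prime_rel_singleton_codomain)
    then show ?thesis
      by (simp add: dprime_def prime_maps_subset prime_rel_singleton_codomain)
  qed
  then show ?thesis
    by (simp add: geometrically_stable_def)
qed

definition spike :: "'x set \<Rightarrow> 'g \<Rightarrow> 'g \<Rightarrow> 'x \<Rightarrow> 'x \<Rightarrow> 'g" where
  "spike X a b p = (\<lambda>v. if v \<in> X then if v = p then b else a else undefined)"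

lemma spike_PiE: "a \<in> G \<Longrightarrow> b \<in> G \<Longrightarrow> spike X a b p \<in> X \<rightarrow>\<^sub>E G"
  by (auto simp: spike_def)

lemma ker_on_spike:
  assumes "a \<noteq> b"
  shows "ker_on X (spike X a b p) = {(u, v). u \<in> X \<and> v \<in> X \<and> (u = p \<longleftrightarrow> v = p)}"
  using assms by (auto simp: ker_on_def spike_def split: if_splits)

lemma spike_mem_prime_rel_iff:
  assumes "a \<in> G" "b \<in> G" "a \<noteq> b" "u \<in> X" "v \<in> X"
  shows "spike X a b p \<in> prime_rel X G {(u, v)} \<longleftrightarrow> (u = p \<longleftrightarrow> v = p)"
  using assms by (simp add: prime_rel_def spike_PiE ker_on_spike)

lemma union_of_varieties_not_closed:
  assumes "a \<in> G" "b \<in> G" "a \<noteq> b" and "distinct [x, y, z]"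
  defines "X \<equiv> {x, y, z}"
  defines "A \<equiv> prime_rel X G {(x, y)}" and "B \<equiv> prime_rel X G {(y, z)}"
  shows "dprime X G (A \<union> B) \<noteq> A \<union> B"
proof -
  have "spike X a b z \<in> A" "spike X a b x \<in> B"
    using assms(1-4) by (auto simp: A_def B_def X_def spike_mem_prime_rel_iff)
  then have "prime_maps X (A \<union> B) \<subseteq> prime_maps X {spike X a b z, spike X a b x}"
    by (intro prime_maps_mono) auto
  also have "\<dots> \<subseteq> ker_on X (spike X a b y)"
    using assms(3,4) by (auto simp: prime_maps_def ker_on_spike X_def)
  finally have "spike X a b y \<in> dprime X G (A \<union> B)"
    using assms(1,2) by (simp add: dprime_def prime_rel_def spike_PiE)
  moreover have "spike X a b y \<notin> A \<union> B"
    using assms(1-4) by (auto simp: A_def B_def X_def spike_mem_prime_rel_iff)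
  ultimately show ?thesis
    by blast
qed

lemma not_geometrically_stable_two_points:
  assumes "a \<in> G" "b \<in> G" "a \<noteq> b"
  shows "\<not> geometrically_stable G"
proof
  assume "geometrically_stable G"
  let ?X = "{0, 1, 2} :: nat set"
  let ?A = "prime_rel ?X G {(0, 1)}" and ?B = "prime_rel ?X G {(1, 2)}"
  have "algebraic_variety ?X G ?A" "algebraic_variety ?X G ?B"
    by (simp_all add: algebraic_variety_prime_rel)
  with \<open>geometrically_stable G\<close> have "dprime ?X G (?A \<union> ?B) = ?A \<union> ?B"
    by (intro geometrically_stableD) simp_all
  moreover have "dprime ?X G (?A \<union> ?B) \<noteq> ?A \<union> ?B"
    using union_of_varieties_not_closed[OF assms, of "0 :: nat" 1 2] by simp
  ultimately show False
    by contradiction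
qed

theorem proposition2p4:
  fixes G :: "'g set"
  assumes "G \<noteq> {}"
  shows "geometrically_stable G \<longleftrightarrow> card G = 1"
proof
  assume "geometrically_stable G"
  then have "a = b" if "a \<in> G" "b \<in> G" for a b
    using that not_geometrically_stable_two_points by metis
  with assms have "is_singleton G"
    by (rule is_singletonI')
  then show "card G = 1"
    by (simp add: is_singleton_altdef)
next
  assume "card G = 1"
  then obtain g where "G = {g}"
    by (rule card_1_singletonE)
  then show "geometrically_stable G"
    by (simp add: geometrically_stable_singleton)
qed

end
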